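(* For $\theta\in\mathbb{R}$ and $u\in\{0,1\}$ let $$\mathcal{H}^\theta_u=\frac{1}{\sqrt{2}}\begin{bmatrix}1 & 1\\ (-1)^u e^{i\theta} & (-1)^{u+1}e^{i\theta}\end{bmatrix}.$$ Then for all $\theta\in\mathbb{R}$ and all $u,v\in\{0,1\}$, $\mathcal{H}^\theta_u\lvert v\rangle=\mathcal{H}^\theta_v\lvert u\rangle$. Moreover, the one-qubit scheme $\Xi=(\mathcal{QE},\mathcal{QD})$ is correct: for every secret bit $s$, every angle $\theta$ and every message bit $b$, $\mathcal{QD}_{s,\theta}(\mathcal{QE}_{s,\theta}(b))=b$ with probability $1$.
   Context: $\{\lvert 0\rangle,\lvert 1\rangle\}$ is the computational basis. The scheme $\Xi=(\mathcal{QE},\mathcal{QD})$, with secret bit $s\in\{0,1\}$ and equatorial angle $\theta$, is defined as follows. $\mathcal{QE}_{s,\theta}(b)$, for a message bit $b\in\{0,1\}$: prepare $\lvert s\rangle$ and $\lvert b\rangle$, sample a uniformly random bit $r\in\{0,1\}$, and output the pair of qubits $(\lvert c_0\rangle,\lvert c_1\rangle)=(\mathcal{H}^\theta_r\lvert s\rangle,\mathcal{H}^\theta_r\lvert b\rangle)$. $\mathcal{QD}_{s,\theta}(\lvert c_0\rangle,\lvert c_1\rangle)$: apply $(\mathcal{H}^\theta_s)^\dagger$ to $\lvert c_0\rangle$ and measure in the computational basis to obtain a bit $r$; then apply $(\mathcal{H}^\theta_r)^\dagger$ to $\lvert c_1\rangle$, measure in the computational basis to obtain a bit, and output it. *)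

theory Defs
  imports "Jordan_Normal_Form.Schur_Decomposition" "HOL-Probability.Probability_Mass_Function"
begin

definition ket :: "nat \<Rightarrow> complex Matrix.vec" where
  "ket v = unit_vec 2 v"

definition Hgate :: "real \<Rightarrow> nat \<Rightarrow> complex mat" where
  "Hgate \<theta> u = (complex_of_real (1 / sqrt 2)) \<cdot>\<^sub>m
     mat_of_rows_list 2 [[1, 1],
       [(-1) ^ u * exp (\<i> * complex_of_real \<theta>), (-1) ^ (u + 1) * exp (\<i> * complex_of_real \<theta>)]]"

definition measure_comp :: "complex Matrix.vec \<Rightarrow> nat pmf" where
  "measure_comp \<psi> = map_pmf (\<lambda>c. if c then 1 else 0) (bernoulli_pmf ((cmod (vec_index \<psi> 1))\<^sup>2))"

definition QE :: "nat \<Rightarrow> real \<Rightarrow> nat \<Rightarrow> (complex Matrix.vec \<times> complex Matrix.vec) pmf" where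
  "QE s \<theta> b = map_pmf (\<lambda>r. (Hgate \<theta> r *\<^sub>v ket s, Hgate \<theta> r *\<^sub>v ket b)) (pmf_of_set {0, 1})"

definition QD :: "nat \<Rightarrow> real \<Rightarrow> complex Matrix.vec \<times> complex Matrix.vec \<Rightarrow> nat pmf" where
  "QD s \<theta> c = bind_pmf (measure_comp (mat_adjoint (Hgate \<theta> s) *\<^sub>v fst c))
     (\<lambda>r. measure_comp (mat_adjoint (Hgate \<theta> r) *\<^sub>v snd c))"

end

theory Submission imports Defs begin

text \<open>Both components of \<open>H\<^sub>u |v\<rangle>\<close> depend on \<open>u\<close> and \<open>v\<close> only through the sign
  \<open>(-1)^(u+v)\<close>, which gives the symmetry. Since the gates are unitary, the decoder's first step
  maps \<open>H\<^sub>r |s\<rangle> = H\<^sub>s |r\<rangle>\<close> back to \<open>|r\<rangle>\<close> and so measures the encoder's random bit \<open>r\<close> with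
  certainty; its second step then maps \<open>H\<^sub>r |b\<rangle>\<close> back to \<open>|b\<rangle>\<close>.\<close>

lemma dim_Hgate [simp]: "dim_row (Hgate \<theta> u) = 2" "dim_col (Hgate \<theta> u) = 2"
  by (simp_all add: Hgate_def mat_of_rows_list_def)

lemma Hgate_index [simp]:
  "Hgate \<theta> u $$ (0, 0) = complex_of_real (1 / sqrt 2)"
  "Hgate \<theta> u $$ (0, Suc 0) = complex_of_real (1 / sqrt 2)"
  "Hgate \<theta> u $$ (Suc 0, 0) = complex_of_real (1 / sqrt 2) * (-1) ^ u * exp (\<i> * complex_of_real \<theta>)"
  "Hgate \<theta> u $$ (Suc 0, Suc 0) = - complex_of_real (1 / sqrt 2) * (-1) ^ u * exp (\<i> * complex_of_real \<theta>)"
  by (simp_all add: Hgate_def mat_of_rows_list_def)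

lemma mat_adjoint_index:
  "i < dim_col A \<Longrightarrow> j < dim_row A \<Longrightarrow> mat_adjoint A $$ (i, j) = cnj (A $$ (j, i))"
  "dim_row (mat_adjoint A) = dim_col A" "dim_col (mat_adjoint A) = dim_row A"
  by (simp_all add: mat_adjoint_def mat_of_rows_index)

lemma cnj_exp_i_mult_exp_i: "cnj (exp (\<i> * complex_of_real \<theta>)) * exp (\<i> * complex_of_real \<theta>) = 1"
  by (simp add: exp_cnj flip: exp_add)

lemma Hgate_unitary: "mat_adjoint (Hgate \<theta> u) * Hgate \<theta> u = 1\<^sub>m 2"
proof (rule eq_matI)
  let ?e = "exp (\<i> * complex_of_real \<theta>)"
  have sqrt2: "complex_of_real (sqrt 2) * complex_of_real (sqrt 2) = 2"
    by (simp flip: of_real_mult)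
  have "(-1) ^ u * cnj ?e * ((-1) ^ u * ?e) = ((-1) ^ u * (-1) ^ u) * (cnj ?e * ?e)"
    by (simp only: ac_simps)
  also have "\<dots> = 1"
    by (simp add: cnj_exp_i_mult_exp_i flip: power_add)
  finally have unit: "(-1) ^ u * cnj ?e * ((-1) ^ u * ?e) = 1" .
  fix i j assume "i < dim_row (1\<^sub>m 2 :: complex mat)" "j < dim_col (1\<^sub>m 2 :: complex mat)"
  then have "i = 0 \<or> i = 1" "j = 0 \<or> j = 1" by auto
  then show "(mat_adjoint (Hgate \<theta> u) * Hgate \<theta> u) $$ (i, j) = 1\<^sub>m 2 $$ (i, j)"
    by (elim disjE) (simp_all add: scalar_prod_def mat_adjoint_index numeral_2_eq_2 unit sqrt2)
qed (simp_all add: mat_adjoint_index)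

lemma Hgate_mult_ket:
  assumes "v \<in> {0, 1}"
  shows "Hgate \<theta> u *\<^sub>v ket v = Matrix.vec 2 (\<lambda>i. if i = 0 then complex_of_real (1 / sqrt 2)
           else complex_of_real (1 / sqrt 2) * (-1) ^ (u + v) * exp (\<i> * complex_of_real \<theta>))"
  using assms
  by (intro eq_vecI) (auto simp: ket_def scalar_prod_def unit_vec_def less_Suc_eq numeral_2_eq_2)

lemma Hgate_mult_ket_swap:
  "u \<in> {0, 1} \<Longrightarrow> v \<in> {0, 1} \<Longrightarrow> Hgate \<theta> u *\<^sub>v ket v = Hgate \<theta> v *\<^sub>v ket u"
  by (simp only: Hgate_mult_ket add.commute)

lemma Hgate_adjoint_mult_Hgate_ket:
  assumes "u \<in> {0, 1}" "v \<in> {0, 1}"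
  shows "mat_adjoint (Hgate \<theta> u) *\<^sub>v (Hgate \<theta> v *\<^sub>v ket u) = ket v"
proof -
  have ket_carrier: "ket v \<in> carrier_vec 2"
    by (simp add: ket_def)
  have "ket v = (mat_adjoint (Hgate \<theta> u) * Hgate \<theta> u) *\<^sub>v ket v"
    using ket_carrier by (simp only: Hgate_unitary one_mult_mat_vec)
  also have "\<dots> = mat_adjoint (Hgate \<theta> u) *\<^sub>v (Hgate \<theta> u *\<^sub>v ket v)"
    using ket_carrier
    by (intro assoc_mult_mat_vec carrier_matI) (simp_all add: mat_adjoint_index)
  also have "\<dots> = mat_adjoint (Hgate \<theta> u) *\<^sub>v (Hgate \<theta> v *\<^sub>v ket u)"
    using Hgate_mult_ket_swap[OF assms] by (simp only:)
  finally show ?thesis ..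
qed

lemma measure_comp_ket:
  assumes "v \<in> {0, 1}"
  shows "measure_comp (ket v) = return_pmf v"
proof -
  have "bernoulli_pmf 0 = return_pmf False" "bernoulli_pmf 1 = return_pmf True"
    by (auto intro!: pmf_eqI split: split_indicator)
  with assms show ?thesis
    by (auto simp: measure_comp_def ket_def)
qed

lemma QD_Hgate_encoding:
  assumes "r \<in> {0, 1}" "s \<in> {0, 1}" "b \<in> {0, 1}"
  shows "QD s \<theta> (Hgate \<theta> r *\<^sub>v ket s, Hgate \<theta> r *\<^sub>v ket b) = return_pmf b"
  using assms
  by (simp add: QD_def bind_return_pmf Hgate_adjoint_mult_Hgate_ket measure_comp_ket Hgate_mult_ket_swap[of r b])

theorem theorem1:
  shows "(\<forall>(\<theta>::real) u v. u \<in> {0, 1} \<longrightarrow> v \<in> {0, 1} \<longrightarrow>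
            Hgate \<theta> u *\<^sub>v ket v = Hgate \<theta> v *\<^sub>v ket u)
       \<and> (\<forall>s (\<theta>::real) b. s \<in> {0, 1} \<longrightarrow> b \<in> {0, 1} \<longrightarrow>
            bind_pmf (QE s \<theta> b) (QD s \<theta>) = return_pmf b)"
proof (intro conjI allI impI)
  fix \<theta> :: real and u v :: nat
  assume "u \<in> {0, 1}" "v \<in> {0, 1}"
  then show "Hgate \<theta> u *\<^sub>v ket v = Hgate \<theta> v *\<^sub>v ket u"
    by (rule Hgate_mult_ket_swap)
next
  fix s b :: nat and \<theta> :: real
  assume "s \<in> {0, 1}" "b \<in> {0, 1}"
  then have "bind_pmf (QE s \<theta> b) (QD s \<theta>) = bind_pmf (pmf_of_set {0, 1 :: nat}) (\<lambda>_. return_pmf b)"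
    unfolding QE_def bind_map_pmf
    by (intro bind_pmf_cong) (auto simp: QD_Hgate_encoding)
  then show "bind_pmf (QE s \<theta> b) (QD s \<theta>) = return_pmf b"
    by simp
qed

end
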